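(* Let $q$ be a prime power, $g,s\ge 1$ integers, $V=\mathrm{GF}(q^g)^s$ regarded as a $gs$-dimensional $\mathrm{GF}(q)$-vector space, and let $1\le k\le s$. Consider the action of $\mathrm{SL}(s,q^g)$ on the set $\mathcal{F}_k$ of fat $k$-dimensional $\mathrm{GF}(q)$-subspaces of $V$ given by $U\mapsto \{xA: x\in U\}$ for $A\in\mathrm{SL}(s,q^g)$ (scalar matrices with entries in $\mathrm{GF}(q)^*$ act trivially, so this is the action of $\mathrm{SL}(s,q^g)/\mathrm{GF}(q)^*$). If $k<s$, this action is transitive on $\mathcal{F}_k$. If $k=s$, $\mathcal{F}_s$ splits into exactly $\frac{q^g-1}{q-1}$ orbits, all of the same size.
   Context: A $\mathrm{GF}(q)$-subspace $U\le V$ is fat if $\dim_{\mathrm{GF}(q^g)}\langle U\rangle_{\mathrm{GF}(q^g)}=\dim_{\mathrm{GF}(q)}U$, i.e. some (equivalently every) $\mathrm{GF}(q)$-basis of $U$ is linearly independent over $\mathrm{GF}(q^g)$. Vectors of $V$ are row vectors and matrices act by right multiplication. *)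

theory Defs
  imports "HOL-Analysis.Analysis"
begin

text \<open>K is a subfield of the (finite) field 'a; it plays the role of GF(q),
  while 'a plays the role of GF(q^g).  Vectors of V = 'a^'n are row vectors.\<close>

definition subfield :: "'a::field set \<Rightarrow> bool" where
  "subfield K \<longleftrightarrow> 0 \<in> K \<and> 1 \<in> K \<and>
     (\<forall>x\<in>K. \<forall>y\<in>K. x + y \<in> K \<and> x * y \<in> K) \<and>
     (\<forall>x\<in>K. - x \<in> K) \<and> (\<forall>x\<in>K. x \<noteq> 0 \<longrightarrow> inverse x \<in> K)"

definition K_subspace :: "'a::field set \<Rightarrow> ('a^'n) set \<Rightarrow> bool" where
  "K_subspace K U \<longleftrightarrow> 0 \<in> U \<and> (\<forall>x\<in>U. \<forall>y\<in>U. x + y \<in> U) \<and>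
     (\<forall>c\<in>K. \<forall>x\<in>U. c *s x \<in> U)"

definition K_basis :: "'a::field set \<Rightarrow> ('a^'n) set \<Rightarrow> (nat \<Rightarrow> 'a^'n) \<Rightarrow> nat \<Rightarrow> bool" where
  "K_basis K U b m \<longleftrightarrow>
     U = {\<Sum>i<m. c i *s b i | c. \<forall>i<m. c i \<in> K} \<and>
     (\<forall>c. (\<forall>i<m. c i \<in> K) \<longrightarrow> (\<Sum>i<m. c i *s b i) = 0 \<longrightarrow> (\<forall>i<m. c i = 0))"

definition K_dim_eq :: "'a::field set \<Rightarrow> ('a^'n) set \<Rightarrow> nat \<Rightarrow> bool" where
  "K_dim_eq K U m \<longleftrightarrow> (\<exists>b. K_basis K U b m)"

text \<open>Fat k-dimensional K-subspaces: dim_K U = k = dim over 'a of the 'a-span of U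
  (vec.dim U is the dimension of the 'a-span of U).\<close>
definition fat_subspaces :: "'a::field set \<Rightarrow> nat \<Rightarrow> ('a^'n) set set" where
  "fat_subspaces K k = {U. K_subspace K U \<and> K_dim_eq K U k \<and> vec.dim U = k}"

definition act :: "'a::field^'n^'n \<Rightarrow> ('a^'n) set \<Rightarrow> ('a^'n) set" where
  "act A U = (\<lambda>x. x v* A) ` U"

definition SL_orbit :: "('a::field^'n) set \<Rightarrow> ('a^'n) set set" where
  "SL_orbit U = {act A U | A :: 'a^'n^'n. det A = 1}"

end

theory Submission
  imports Defs
begin

text \<open>A K-basis of a fat k-subspace U is linearly independent over \<open>'a\<close>, so it extends to the
  rows of an invertible matrix P (a frame of U): U is the K-span of the first k rows of P, and
  acting by A replaces P by \<open>P ** A\<close>.  For k < n a row of Q outside the first k can be rescaled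
  so that det Q = det P; then \<open>P\<inverse> Q\<close> has determinant 1 and carries U to W.

  For k = n the K-span of the rows of P determines det P up to a factor in K*: if every row of Q
  lies in it, then Q = C P for a matrix C over K.  Conversely, frames whose determinants differ by
  a factor in K* become SL-related after rescaling a row.  Hence the SL-orbits of fat n-subspaces
  correspond to the cosets of K* in the unit group of \<open>'a\<close>, of which there are (q^g - 1)/(q - 1).
  Since SL is normal in GL, an invertible D maps SL-orbits bijectively onto SL-orbits, and GL is
  transitive on fat n-subspaces, so all orbits have the same size.\<close>

lemma
  assumes "subfield K"
  shows subfield_zero: "0 \<in> K" and subfield_one: "1 \<in> K"
    and subfield_add: "x \<in> K \<Longrightarrow> y \<in> K \<Longrightarrow> x + y \<in> K"
    and subfield_mult: "x \<in> K \<Longrightarrow> y \<in> K \<Longrightarrow> x * y \<in> K"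
    and subfield_inverse: "x \<in> K \<Longrightarrow> inverse x \<in> K"
  using assms unfolding subfield_def by auto

lemma subfield_sum: "subfield K \<Longrightarrow> (\<And>i. i \<in> I \<Longrightarrow> f i \<in> K) \<Longrightarrow> sum f I \<in> K"
  by (induction I rule: infinite_finite_induct) (auto simp: subfield_zero subfield_add)

lemma subfield_prod: "subfield K \<Longrightarrow> (\<And>i. i \<in> I \<Longrightarrow> f i \<in> K) \<Longrightarrow> prod f I \<in> K"
  by (induction I rule: infinite_finite_induct) (auto simp: subfield_one subfield_mult)

lemma det_in_subfield:
  assumes K: "subfield K" and A: "\<And>i j. (A::'a::field^'n^'n) $ i $ j \<in> K"
  shows "det A \<in> K"
proof -
  have "of_int (sign p) \<in> K" for p :: "'n \<Rightarrow> 'n"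
    using K by (simp add: sign_def subfield_one subfield_def)
  then show ?thesis
    unfolding det_def by (intro subfield_sum[OF K] subfield_mult[OF K] subfield_prod[OF K] A)
qed

section \<open>Cosets of the unit group of a subfield\<close>

definition unit_coset :: "'a::field set \<Rightarrow> 'a \<Rightarrow> 'a set" where
  "unit_coset K x = (\<lambda>y. x * y) ` (K - {0})"

lemma unit_coset_mult:
  assumes K: "subfield K" and t: "t \<in> K" "t \<noteq> 0"
  shows "unit_coset K (x * t) = unit_coset K x"
proof -
  have units: "(\<lambda>y. t * y) ` (K - {0}) = K - {0}"
  proof
    show "(\<lambda>y. t * y) ` (K - {0}) \<subseteq> K - {0}"
      using subfield_mult[OF K] t by auto
    show "K - {0} \<subseteq> (\<lambda>y. t * y) ` (K - {0})"
    proof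
      fix y assume "y \<in> K - {0}"
      then have "y = t * (inverse t * y)" "inverse t * y \<in> K - {0}"
        using t subfield_mult[OF K] subfield_inverse[OF K] by auto
      then show "y \<in> (\<lambda>y. t * y) ` (K - {0})"
        by (rule image_eqI)
    qed
  qed
  have "(\<lambda>y. x * t * y) ` (K - {0}) = (\<lambda>y. x * y) ` ((\<lambda>y. t * y) ` (K - {0}))"
    by (simp add: image_image mult.assoc)
  then show ?thesis
    unfolding unit_coset_def units .
qed

lemma unit_coset_eq_iff:
  assumes K: "subfield K" and a: "a \<noteq> 0" and b: "b \<noteq> 0"
  shows "unit_coset K a = unit_coset K b \<longleftrightarrow> b / a \<in> K"
proof
  assume "unit_coset K a = unit_coset K b"
  moreover have "b \<in> unit_coset K b"
    unfolding unit_coset_def using subfield_one[OF K] by force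
  ultimately obtain y where "y \<in> K" "b = a * y"
    unfolding unit_coset_def by auto
  then show "b / a \<in> K"
    using a by simp
next
  assume "b / a \<in> K"
  then show "unit_coset K a = unit_coset K b"
    using unit_coset_mult[OF K, of "b / a" a] a b by simp
qed

lemma card_unit_cosets:
  assumes K: "subfield K"
  shows "card (unit_coset K ` (UNIV - {0::'a::{field,finite}})) * (card K - 1) = CARD('a) - 1"
proof -
  let ?C = "unit_coset K ` (UNIV - {0::'a})"
  have self: "x \<in> unit_coset K x" for x
    unfolding unit_coset_def using subfield_one[OF K] by force
  have "\<Union>?C = UNIV - {0}"
    using self by (auto simp: unit_coset_def)
  then have "card (\<Union>?C) = CARD('a) - 1"
    by (simp add: card_Diff_singleton)
  moreover have "card c = card K - 1" if "c \<in> ?C" for c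
  proof -
    obtain x where x: "x \<noteq> 0" "c = unit_coset K x"
      using \<open>c \<in> ?C\<close> by blast
    then have "inj_on (\<lambda>y. x * y) (K - {0})"
      by (auto simp: inj_on_def)
    then show ?thesis
      using x subfield_zero[OF K] by (simp add: unit_coset_def card_image card_Diff_singleton)
  qed
  moreover have "c1 \<inter> c2 = {}" if c12: "c1 \<in> ?C" "c2 \<in> ?C" and "c1 \<noteq> c2" for c1 c2
  proof (rule ccontr)
    assume "c1 \<inter> c2 \<noteq> {}"
    obtain a b where c: "c1 = unit_coset K a" "c2 = unit_coset K b"
      using c12 by blast
    then obtain y1 y2 where y: "y1 \<in> K - {0}" "y2 \<in> K - {0}" "a * y1 = b * y2"
      using \<open>c1 \<inter> c2 \<noteq> {}\<close> unfolding unit_coset_def by blast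
    have "c1 = unit_coset K (a * y1)"
      using c(1) y(1) unit_coset_mult[OF K, of y1 a] by simp
    moreover have "c2 = unit_coset K (b * y2)"
      using c(2) y(2) unit_coset_mult[OF K, of y2 b] by simp
    ultimately show False
      using y(3) \<open>c1 \<noteq> c2\<close> by simp
  qed
  ultimately show ?thesis
    using card_partition[of ?C "card K - 1"] by (simp add: mult.commute)
qed

text \<open>K-bases are indexed by \<open>{..<m}\<close> while matrix rows are indexed by \<open>'n\<close>; \<open>enum_nth\<close> fixes
  a bijection between \<open>{..<CARD('n)}\<close> and \<open>'n\<close>.\<close>

definition enum_nth :: "nat \<Rightarrow> 'n::finite" where
  "enum_nth = (SOME e. bij_betw e {..<CARD('n)} UNIV)"

definition enum_pos :: "'n::finite \<Rightarrow> nat" where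
  "enum_pos = the_inv_into {..<CARD('n)} enum_nth"

lemma bij_betw_enum_nth: "bij_betw (enum_nth :: nat \<Rightarrow> 'n::finite) {..<CARD('n)} UNIV"
proof -
  have "\<exists>e. bij_betw e {..<CARD('n)} (UNIV :: 'n set)"
    using ex_bij_betw_nat_finite[of "UNIV :: 'n set"] by (simp add: atLeast0LessThan)
  then show ?thesis
    unfolding enum_nth_def by (rule someI_ex)
qed

lemma enum_pos_less: "enum_pos (j::'n::finite) < CARD('n)"
  using bij_betw_the_inv_into[OF bij_betw_enum_nth[where 'n='n]]
  by (auto simp: enum_pos_def bij_betw_def)

lemma enum_nth_pos [simp]: "enum_nth (enum_pos j) = (j::'n::finite)"
  using bij_betw_enum_nth[where 'n='n] unfolding enum_pos_def
  by (simp add: bij_betw_def f_the_inv_into_f)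

lemma enum_pos_nth [simp]: "i < CARD('n) \<Longrightarrow> enum_pos (enum_nth i :: 'n::finite) = i"
  using bij_betw_enum_nth[where 'n='n] unfolding enum_pos_def
  by (simp add: bij_betw_def the_inv_into_f_f)

lemma enum_nth_eq_iff:
  "i < CARD('n) \<Longrightarrow> i' < CARD('n) \<Longrightarrow> (enum_nth i :: 'n::finite) = enum_nth i' \<longleftrightarrow> i = i'"
  by (metis enum_pos_nth)

lemma sum_UNIV_enum: "(\<Sum>j\<in>UNIV. f j) = (\<Sum>i<CARD('n). f (enum_nth i :: 'n::finite))"
  using sum.reindex_bij_betw[OF bij_betw_enum_nth, of f] by simp

section \<open>Spans and independence of finite families\<close>

definition K_span :: "'a::field set \<Rightarrow> (nat \<Rightarrow> 'a^'n) \<Rightarrow> nat \<Rightarrow> ('a^'n) set" where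
  "K_span K b m = {\<Sum>i<m. c i *s b i | c. \<forall>i<m. c i \<in> K}"

definition K_independent :: "'a::field set \<Rightarrow> (nat \<Rightarrow> 'a^'n) \<Rightarrow> nat \<Rightarrow> bool" where
  "K_independent K b m \<longleftrightarrow>
     (\<forall>c. (\<forall>i<m. c i \<in> K) \<longrightarrow> (\<Sum>i<m. c i *s b i) = 0 \<longrightarrow> (\<forall>i<m. c i = 0))"

lemma K_basis_iff: "K_basis K U b m \<longleftrightarrow> U = K_span K b m \<and> K_independent K b m"
  by (simp add: K_basis_def K_span_def K_independent_def)

lemma K_span_cong: "(\<And>i. i < m \<Longrightarrow> b i = b' i) \<Longrightarrow> K_span K b m = K_span K b' m"
  unfolding K_span_def by (metis (no_types, lifting) lessThan_iff sum.cong)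

lemma K_subspace_sum: "K_subspace K U \<Longrightarrow> (\<And>i. i \<in> I \<Longrightarrow> f i \<in> U) \<Longrightarrow> sum f I \<in> U"
  by (induction I rule: infinite_finite_induct) (auto simp: K_subspace_def)

lemma K_subspace_K_span:
  assumes K: "subfield K"
  shows "K_subspace K (K_span K b m)"
  unfolding K_subspace_def
proof (intro conjI ballI)
  show "0 \<in> K_span K b m"
    unfolding K_span_def using subfield_zero[OF K] by (auto intro!: exI[of _ "\<lambda>_. 0"])
next
  fix x y assume "x \<in> K_span K b m" "y \<in> K_span K b m"
  then obtain c d where "\<forall>i<m. c i \<in> K" "\<forall>i<m. d i \<in> K"
    and "x = (\<Sum>i<m. c i *s b i)" "y = (\<Sum>i<m. d i *s b i)"
    unfolding K_span_def by blast
  then show "x + y \<in> K_span K b m"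
    unfolding K_span_def using subfield_add[OF K]
    by (auto simp: vec.scale_left_distrib sum.distrib intro!: exI[of _ "\<lambda>i. c i + d i"])
next
  fix a x assume "a \<in> K" "x \<in> K_span K b m"
  then obtain c where "\<forall>i<m. c i \<in> K" "x = (\<Sum>i<m. c i *s b i)"
    unfolding K_span_def by blast
  then show "a *s x \<in> K_span K b m"
    unfolding K_span_def using subfield_mult[OF K] \<open>a \<in> K\<close>
    by (auto simp: vec.scale_sum_right intro!: exI[of _ "\<lambda>i. a * c i"])
qed

lemma K_span_base:
  assumes K: "subfield K" and i: "i < m"
  shows "b i \<in> K_span K b m"
proof -
  have "b i = (\<Sum>j<m. (if j = i then 1 else 0) *s b j)"
    using i by (simp add: if_distrib[of "\<lambda>c. c *s _"] cong: if_cong)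
  then show ?thesis
    unfolding K_span_def using subfield_zero[OF K] subfield_one[OF K] by fastforce
qed

lemma K_span_least:
  assumes U: "K_subspace K U" and b: "\<And>i. i < m \<Longrightarrow> b i \<in> U"
  shows "K_span K b m \<subseteq> U"
  using U b unfolding K_span_def K_subspace_def by (auto intro!: K_subspace_sum[OF U])

lemma K_span_scale_generator:
  assumes K: "subfield K" and a: "a \<in> K" "a \<noteq> 0" and j: "j < m"
  shows "K_span K (b(j := a *s b j)) m = K_span K b m"
proof
  let ?b' = "b(j := a *s b j)"
  note closed = K_subspace_K_span[OF K] and base = K_span_base[OF K]
  show "K_span K ?b' m \<subseteq> K_span K b m"
  proof (rule K_span_least[OF closed])
    fix i assume "i < m"
    then show "?b' i \<in> K_span K b m"
      using closed[of b m] base[of _ m b] a j by (auto simp: K_subspace_def)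
  qed
  show "K_span K b m \<subseteq> K_span K ?b' m"
  proof (rule K_span_least[OF closed])
    fix i assume i: "i < m"
    show "b i \<in> K_span K ?b' m"
    proof (cases "i = j")
      case True
      have "?b' j \<in> K_span K ?b' m"
        using base[OF j] .
      then have "inverse a *s ?b' j \<in> K_span K ?b' m"
        using closed[of ?b' m] subfield_inverse[OF K a(1)] unfolding K_subspace_def by blast
      then show ?thesis
        using True a by simp
    next
      case False
      then show ?thesis
        using base[OF i, of ?b'] by simp
    qed
  qed
qed

lemma K_span_subset_span: "K_span K b m \<subseteq> vec.span (b ` {..<m})"
proof
  fix x assume "x \<in> K_span K b m"
  then obtain c where "x = (\<Sum>i<m. c i *s b i)"
    unfolding K_span_def by blast
  then show "x \<in> vec.span (b ` {..<m})"
    by (auto intro!: vec.span_sum vec.span_scale intro: vec.span_base)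
qed

lemma K_independent_UNIV_iff:
  "K_independent UNIV b m \<longleftrightarrow> inj_on b {..<m} \<and> vec.independent (b ` {..<m})"
proof
  assume ind: "K_independent UNIV b m"
  then have zero: "(\<Sum>i<m. c i *s b i) = 0 \<Longrightarrow> i < m \<Longrightarrow> c i = 0" for c i
    by (simp add: K_independent_def)
  have inj: "inj_on b {..<m}"
  proof (rule inj_onI, rule ccontr)
    fix i j assume ij: "i \<in> {..<m}" "j \<in> {..<m}" "b i = b j" "i \<noteq> j"
    let ?c = "\<lambda>l. if l = i then 1 else if l = j then -1 else 0"
    have "(\<Sum>l<m. ?c l *s b l) = (\<Sum>l<m. (if l = i then b i else 0) - (if l = j then b j else 0))"
      by (rule sum.cong) (use ij in auto)
    also have "\<dots> = 0"
      using ij by (simp add: sum_subtractf)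
    finally show False
      using zero[of ?c i] ij by simp
  qed
  have "vec.independent (b ` {..<m})"
  proof
    assume "vec.dependent (b ` {..<m})"
    then obtain u i where i: "i < m" "u (b i) \<noteq> 0" and "(\<Sum>v\<in>b ` {..<m}. u v *s v) = 0"
      using vec.dependent_finite[of "b ` {..<m}"] by auto
    then have "(\<Sum>i<m. u (b i) *s b i) = 0"
      using inj by (simp add: sum.reindex)
    then show False
      using zero[of "\<lambda>i. u (b i)" i] i by simp
  qed
  with inj show "inj_on b {..<m} \<and> vec.independent (b ` {..<m})"
    by blast
next
  assume "inj_on b {..<m} \<and> vec.independent (b ` {..<m})"
  then have inj: "inj_on b {..<m}" and ind: "vec.independent (b ` {..<m})"
    by blast+
  show "K_independent UNIV b m"
    unfolding K_independent_def
  proof (intro allI impI)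
    fix c i assume "\<forall>i<m. c i \<in> UNIV" "(\<Sum>i<m. c i *s b i) = 0" "i < m"
    moreover define u where "u = c \<circ> the_inv_into {..<m} b"
    ultimately have "(\<Sum>v\<in>b ` {..<m}. u v *s v) = 0" "b i \<in> b ` {..<m}"
      using inj by (simp_all add: sum.reindex the_inv_into_f_f)
    then have "u (b i) = 0"
      using vec.independentD[OF ind] by blast
    then show "c i = 0"
      using inj \<open>i < m\<close> by (simp add: u_def the_inv_into_f_f)
  qed
qed

lemma K_independent_extend_step:
  assumes b: "K_independent UNIV (b :: nat \<Rightarrow> 'a::field^'n::finite) k" and k: "k < CARD('n)"
  obtains v where "K_independent UNIV (b(k := v)) (Suc k)"
proof -
  have inj: "inj_on b {..<k}" and ind: "vec.independent (b ` {..<k})"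
    using b K_independent_UNIV_iff by blast+
  have "vec.dim (b ` {..<k}) \<le> k"
    using vec.dim_le_card'[of "b ` {..<k}"] card_image_le[of "{..<k}" b] by simp
  have "vec.span (b ` {..<k}) \<noteq> UNIV"
  proof
    assume "vec.span (b ` {..<k}) = UNIV"
    then have "vec.dim (b ` {..<k}) = CARD('n)"
      by (metis vec.dim_span vec_dim_card)
    then show False
      using \<open>vec.dim (b ` {..<k}) \<le> k\<close> k by simp
  qed
  then obtain v where v: "v \<notin> vec.span (b ` {..<k})"
    by blast
  then have "v \<notin> b ` {..<k}"
    by (metis vec.span_base)
  then have "inj_on (b(k := v)) {..<Suc k}"
    using inj by (auto simp: lessThan_Suc inj_on_def)
  moreover have "b(k := v) ` {..<Suc k} = insert v (b ` {..<k})"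
    by (auto simp: lessThan_Suc)
  with vec.independent_insertI[OF v ind] have "vec.independent (b(k := v) ` {..<Suc k})"
    by simp
  ultimately have "K_independent UNIV (b(k := v)) (Suc k)"
    by (simp add: K_independent_UNIV_iff)
  then show thesis
    using that by blast
qed

lemma K_independent_extend:
  assumes b: "K_independent UNIV (b :: nat \<Rightarrow> 'a::field^'n::finite) k" and k: "k \<le> CARD('n)"
  obtains b' where "\<forall>i<k. b' i = b i" "K_independent UNIV b' CARD('n)"
proof -
  have "\<exists>b'. (\<forall>i<k. b' i = b i) \<and> K_independent UNIV b' CARD('n)"
    using k
  proof (induction rule: dec_induct)
    case base
    show ?case using b by blast
  next
    case (step l)
    then obtain b' where b': "\<forall>i<k. b' i = b i" "K_independent UNIV b' l"
      by blast
    obtain v where "K_independent UNIV (b'(l := v)) (Suc l)"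
      using K_independent_extend_step[OF b'(2)] step.hyps(2) by blast
    moreover have "\<forall>i<k. (b'(l := v)) i = b i"
      using b'(1) step.hyps(1) by auto
    ultimately show ?case
      by blast
  qed
  then show thesis
    using that by blast
qed

lemma fat_basis_independent:
  assumes K: "subfield K" and b: "K_basis K U b k" and dim: "vec.dim U = k"
  shows "K_independent UNIV b k"
proof -
  let ?B = "b ` {..<k}"
  have U: "U = K_span K b k"
    using b by (simp add: K_basis_iff)
  have BU: "?B \<subseteq> U" and UB: "U \<subseteq> vec.span ?B"
    using K_span_base[OF K] K_span_subset_span unfolding U by blast+
  have card: "card ?B = k"
    using card_image_le[of "{..<k}" b] vec.dim_le_card[OF UB] dim by simp
  then have "vec.independent ?B"
    using vec.card_le_dim_spanning[OF BU UB] dim by simp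
  moreover have "inj_on b {..<k}"
    using card by (simp add: eq_card_imp_inj_on)
  ultimately show ?thesis
    by (simp add: K_independent_UNIV_iff)
qed

section \<open>Frames of fat subspaces\<close>

lemma vector_matrix_mult_rows: "x v* A = (\<Sum>j\<in>UNIV. x $ j *s A $ j)"
  by (simp add: vec_eq_iff vector_matrix_mult_def sum_component mult.commute)

lemma matrix_matrix_mult_row: "(A ** B) $ i = A $ i v* B"
  by (simp add: vec_eq_iff vector_matrix_mult_def matrix_matrix_mult_def mult.commute)

lemma act_K_span: "act A (K_span K b m) = K_span K (\<lambda>i. b i v* A) m"
proof -
  have "(\<Sum>i<m. c i *s b i) v* A = (\<Sum>i<m. c i *s (b i v* A))" for c
    by (simp add: vec.linear_sum[OF matrix_vector_mul_linear_gen, of "transpose A", simplified]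
        scalar_vector_matrix_assoc)
  moreover have "act A (K_span K b m) = {(\<Sum>i<m. c i *s b i) v* A | c. \<forall>i<m. c i \<in> K}"
    by (auto simp: act_def K_span_def)
  ultimately show ?thesis
    by (simp add: K_span_def)
qed

lemma det_nonzero_iff_rows_independent:
  "det (A::'a::field^'n::finite^'n) \<noteq> 0 \<longleftrightarrow> K_independent UNIV (\<lambda>i. A $ enum_nth i) CARD('n)"
proof -
  have "det A \<noteq> 0 \<longleftrightarrow> (\<forall>c. (\<Sum>j\<in>UNIV. c j *s A $ j) = 0 \<longrightarrow> (\<forall>j. c j = 0))"
    by (simp add: invertible_det_nz[symmetric] invertible_right_inverse
        matrix_right_invertible_independent_rows row_def vec_lambda_eta)
  also have "\<dots> \<longleftrightarrow>
      (\<forall>c. (\<Sum>i<CARD('n). c i *s A $ enum_nth i) = 0 \<longrightarrow> (\<forall>i<CARD('n). c i = 0))"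
  proof (intro iffI allI impI)
    fix c :: "nat \<Rightarrow> 'a" and i
    assume indep: "\<forall>c. (\<Sum>j\<in>UNIV. c j *s A $ j) = 0 \<longrightarrow> (\<forall>j. c j = 0)"
      and sum: "(\<Sum>i<CARD('n). c i *s A $ enum_nth i) = 0" and i: "i < CARD('n)"
    have "(\<Sum>j\<in>UNIV. c (enum_pos j) *s A $ j) = (\<Sum>i<CARD('n). c i *s A $ enum_nth i)"
      by (auto simp: sum_UNIV_enum intro!: sum.cong)
    then have "c (enum_pos (enum_nth i :: 'n)) = 0"
      using indep sum by auto
    then show "c i = 0"
      using i by simp
  next
    fix c :: "'n \<Rightarrow> 'a" and j :: 'n
    assume indep: "\<forall>c. (\<Sum>i<CARD('n). c i *s A $ enum_nth i) = 0 \<longrightarrow> (\<forall>i<CARD('n). c i = 0)"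
      and "(\<Sum>j\<in>UNIV. c j *s A $ j) = 0"
    then have "(\<Sum>i<CARD('n). c (enum_nth i) *s A $ enum_nth i) = 0"
      by (simp add: sum_UNIV_enum)
    then have "c (enum_nth (enum_pos j)) = 0"
      using spec[OF indep, of "\<lambda>i. c (enum_nth i)"] enum_pos_less[of j] by blast
    then show "c j = 0"
      by simp
  qed
  finally show ?thesis
    by (simp add: K_independent_def)
qed

definition row_span :: "'a::field set \<Rightarrow> 'a^'n^'n::finite \<Rightarrow> ('a^'n) set" where
  "row_span K P = K_span K (\<lambda>i. P $ enum_nth i) CARD('n)"

lemma act_row_span: "act A (row_span K P) = row_span K (P ** A)"
  by (simp add: row_span_def act_K_span matrix_matrix_mult_row)

lemma row_span_fat:
  assumes K: "subfield K" and P: "det (P::'a::field^'n::finite^'n) \<noteq> 0"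
  shows "row_span K P \<in> fat_subspaces K CARD('n)"
proof -
  let ?b = "\<lambda>i. P $ enum_nth i" and ?n = "CARD('n)"
  have ind: "K_independent UNIV ?b ?n"
    using P det_nonzero_iff_rows_independent by blast
  then have "K_basis K (row_span K P) ?b ?n"
    by (simp add: K_basis_iff row_span_def K_independent_def)
  moreover have "vec.dim (row_span K P) = ?n"
  proof (rule antisym)
    show "vec.dim (row_span K P) \<le> ?n"
      by (rule dim_subset_UNIV_cart_gen)
    have "card (?b ` {..<?n}) = ?n" "vec.independent (?b ` {..<?n})"
      using ind by (simp_all add: K_independent_UNIV_iff card_image)
    moreover have "?b ` {..<?n} \<subseteq> row_span K P"
      using K_span_base[OF K] by (auto simp: row_span_def)
    ultimately show "?n \<le> vec.dim (row_span K P)"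
      using vec.independent_card_le_dim by metis
  qed
  ultimately show ?thesis
    using K_subspace_K_span[OF K]
    by (auto simp: fat_subspaces_def K_dim_eq_def row_span_def)
qed

lemma fat_subspace_frame:
  fixes U :: "('a::field^'n::finite) set"
  assumes K: "subfield K" and U: "U \<in> fat_subspaces K k"
    and k: "k \<le> CARD('n)"
  obtains P :: "'a^'n^'n" where "det P \<noteq> 0" "U = K_span K (\<lambda>i. P $ enum_nth i) k"
proof -
  obtain b where b: "K_basis K U b k" "vec.dim U = k"
    using U by (auto simp: fat_subspaces_def K_dim_eq_def)
  then have "K_independent UNIV b k"
    by (intro fat_basis_independent[OF K])
  then obtain b' where b': "\<forall>i<k. b' i = b i" "K_independent UNIV b' CARD('n)"
    using K_independent_extend k by blast
  define P :: "'a^'n^'n" where "P = (\<chi> j. b' (enum_pos j))"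
  have rows: "P $ enum_nth i = b' i" if "i < CARD('n)" for i
    using that by (simp add: P_def)
  show thesis
  proof
    have "K_independent UNIV (\<lambda>i. P $ enum_nth i) CARD('n)"
      using b'(2) rows by (simp add: K_independent_def)
    then show "det P \<noteq> 0"
      by (simp add: det_nonzero_iff_rows_independent)
    have "K_span K b k = K_span K (\<lambda>i. P $ enum_nth i) k"
      using b'(1) rows k by (intro K_span_cong) auto
    then show "U = K_span K (\<lambda>i. P $ enum_nth i) k"
      using b(1) by (simp add: K_basis_iff)
  qed
qed

lemma fat_subspaces_eq_row_spans:
  assumes K: "subfield K"
  shows "fat_subspaces K CARD('n) = row_span K ` {P :: 'a::field^'n::finite^'n. det P \<noteq> 0}"
proof
  show "fat_subspaces K CARD('n) \<subseteq> row_span K ` {P :: 'a^'n^'n. det P \<noteq> 0}"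
  proof
    fix U assume "U \<in> (fat_subspaces K CARD('n) :: ('a^'n) set set)"
    then obtain P :: "'a^'n^'n" where "det P \<noteq> 0" "U = K_span K (\<lambda>i. P $ enum_nth i) CARD('n)"
      by (rule fat_subspace_frame[OF K _ order_refl])
    then show "U \<in> row_span K ` {P :: 'a^'n^'n. det P \<noteq> 0}"
      by (auto simp: row_span_def)
  qed
  show "row_span K ` {P :: 'a^'n^'n. det P \<noteq> 0} \<subseteq> fat_subspaces K CARD('n)"
    using row_span_fat[OF K] by blast
qed

lemma det_quotient_in_subfield:
  assumes K: "subfield K" and P: "det (P::'a::field^'n::finite^'n) \<noteq> 0"
    and QP: "row_span K Q \<subseteq> row_span K P"
  shows "det Q / det P \<in> K"
proof -
  have "\<exists>c. (\<forall>i<CARD('n). c i \<in> K) \<and> Q $ j = (\<Sum>i<CARD('n). c i *s P $ enum_nth i)" for j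
  proof -
    have "Q $ enum_nth (enum_pos j) \<in> row_span K Q"
      unfolding row_span_def by (rule K_span_base[OF K enum_pos_less])
    then have "Q $ j \<in> row_span K P"
      using QP by auto
    then show ?thesis
      by (auto simp: row_span_def K_span_def)
  qed
  then obtain c where c: "\<And>j i. i < CARD('n) \<Longrightarrow> c j i \<in> K"
    and Q: "\<And>j. Q $ j = (\<Sum>i<CARD('n). c j i *s P $ enum_nth i)"
    by metis
  define C :: "'a^'n^'n" where "C = (\<chi> j l. c j (enum_pos l))"
  have "Q $ j = (C ** P) $ j" for j
    unfolding Q matrix_matrix_mult_row vector_matrix_mult_rows sum_UNIV_enum
    by (auto simp: C_def intro!: sum.cong)
  then have "Q = C ** P"
    by (simp add: vec_eq_iff)
  then have "det Q / det P = det C"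
    using P by (simp add: det_mul)
  also have "\<dots> \<in> K"
    by (rule det_in_subfield[OF K]) (simp add: C_def c enum_pos_less)
  finally show ?thesis .
qed

definition scale_row :: "'n \<Rightarrow> 'a \<Rightarrow> 'a::field^'n^'n \<Rightarrow> 'a^'n^'n::finite" where
  "scale_row j c P = (\<chi> i. if i = j then c *s P $ i else P $ i)"

lemma det_scale_row: "det (scale_row j c P) = c * det P"
  using det_row_mul[of j c "\<lambda>i. P $ i" "\<lambda>i. P $ i"] by (simp add: scale_row_def)

lemma row_span_scale_row:
  fixes P :: "'a::field^'n::finite^'n"
  assumes K: "subfield K" and c: "c \<in> K" "c \<noteq> 0"
  shows "row_span K (scale_row j c P) = row_span K P"
proof -
  let ?b = "\<lambda>i. P $ enum_nth i"
  have "row_span K (scale_row j c P) = K_span K (?b(enum_pos j := c *s ?b (enum_pos j))) CARD('n)"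
    unfolding row_span_def
    by (rule K_span_cong) (auto simp: scale_row_def enum_nth_eq_iff enum_pos_less)
  also have "\<dots> = row_span K P"
    unfolding row_span_def by (rule K_span_scale_generator[OF K c enum_pos_less])
  finally show ?thesis .
qed

section \<open>The action of SL\<close>

lemma act_mult: "act (A ** B) U = act B (act A U)"
  by (auto simp: act_def image_image vector_matrix_mul_assoc)

lemma act_mat_1 [simp]: "act (mat 1) U = U"
  by (simp add: act_def)

lemma det_nonzero_inverseE:
  assumes "det (A::'a::field^'n::finite^'n) \<noteq> 0"
  obtains A' where "A ** A' = mat 1" "A' ** A = mat 1" "det A' = inverse (det A)"
proof -
  obtain A' where A': "A ** A' = mat 1" "A' ** A = mat 1"
    using assms invertible_det_nz invertible_def by metis
  then have "det A * det A' = 1"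
    by (metis det_I det_mul)
  then show thesis
    using that A' inverse_unique by metis
qed

lemma SL_orbit_self: "U \<in> SL_orbit (U :: ('a::field^'n::finite) set)"
  unfolding SL_orbit_def by (metis (mono_tags) act_mat_1 det_I mem_Collect_eq)

lemma SL_orbit_trans:
  assumes "W \<in> SL_orbit U" "X \<in> SL_orbit W"
  shows "X \<in> SL_orbit (U :: ('a::field^'n::finite) set)"
proof -
  obtain A B :: "'a^'n^'n" where "det A = 1" "W = act A U" "det B = 1" "X = act B W"
    using assms unfolding SL_orbit_def by blast
  then have "det (A ** B) = 1" "X = act (A ** B) U"
    by (simp_all add: det_mul act_mult)
  then show ?thesis
    unfolding SL_orbit_def by blast
qed

lemma SL_orbit_sym:
  assumes "W \<in> SL_orbit (U :: ('a::field^'n::finite) set)"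
  shows "U \<in> SL_orbit W"
proof -
  obtain A :: "'a^'n^'n" where A: "det A = 1" "W = act A U"
    using assms unfolding SL_orbit_def by blast
  obtain A' where "A ** A' = mat 1" "det A' = 1"
    using det_nonzero_inverseE[of A] A(1) by auto
  then have "U = act A' W"
    by (simp add: A(2) act_mult[symmetric])
  then show ?thesis
    unfolding SL_orbit_def using \<open>det A' = 1\<close> by blast
qed

lemma SL_orbit_eq_iff: "SL_orbit U = SL_orbit W \<longleftrightarrow> W \<in> SL_orbit (U :: ('a::field^'n::finite) set)"
  using SL_orbit_self SL_orbit_trans SL_orbit_sym by blast

text \<open>SL is normal in GL: conjugating by an invertible D carries SL-orbits onto SL-orbits.\<close>

lemma SL_orbit_act:
  assumes D: "det (D::'a::field^'n::finite^'n) \<noteq> 0"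
  shows "SL_orbit (act D U) = act D ` SL_orbit U"
proof -
  obtain D' where D': "D ** D' = mat 1" "D' ** D = mat 1" "det D' = inverse (det D)"
    using det_nonzero_inverseE[OF D] by blast
  have conj: "act B (act D U) = act D (act (D ** B ** D') U)" for B
    by (simp add: act_mult[symmetric] matrix_mul_assoc[symmetric] D'(2))
  have det_conj: "det (D ** B ** D') = det B" "det (D' ** B ** D) = det B" for B
    using D D'(3) by (simp_all add: det_mul)
  show ?thesis
  proof
    show "SL_orbit (act D U) \<subseteq> act D ` SL_orbit U"
    proof
      fix X assume "X \<in> SL_orbit (act D U)"
      then obtain B :: "'a^'n^'n" where "det B = 1" "X = act B (act D U)"
        unfolding SL_orbit_def by blast
      then have "det (D ** B ** D') = 1" "X = act D (act (D ** B ** D') U)"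
        by (simp_all add: conj det_conj)
      then show "X \<in> act D ` SL_orbit U"
        unfolding SL_orbit_def by blast
    qed
    show "act D ` SL_orbit U \<subseteq> SL_orbit (act D U)"
    proof
      fix X assume "X \<in> act D ` SL_orbit U"
      then obtain A :: "'a^'n^'n" where "det A = 1" "X = act D (act A U)"
        unfolding SL_orbit_def by blast
      moreover have "D ** (D' ** A ** D) ** D' = A"
        by (simp add: matrix_mul_assoc D'(1)) (simp add: matrix_mul_assoc[symmetric] D'(1))
      ultimately have "det (D' ** A ** D) = 1" "X = act (D' ** A ** D) (act D U)"
        by (simp_all add: conj det_conj)
      then show "X \<in> SL_orbit (act D U)"
        unfolding SL_orbit_def by blast
    qed
  qed
qed

lemma card_SL_orbit_act:
  assumes D: "det (D::'a::field^'n::finite^'n) \<noteq> 0"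
  shows "card (SL_orbit (act D U)) = card (SL_orbit U)"
proof -
  obtain D' where "D ** D' = mat 1"
    using det_nonzero_inverseE[OF D] by blast
  then have "inj (act D)"
    by (metis act_mat_1 act_mult injI)
  then show ?thesis
    by (simp add: SL_orbit_act[OF D] card_image inj_on_subset)
qed

lemma row_span_mem_SL_orbit_iff:
  assumes K: "subfield K"
    and P: "det (P::'a::field^'n::finite^'n) \<noteq> 0" and Q: "det (Q::'a^'n^'n) \<noteq> 0"
  shows "row_span K Q \<in> SL_orbit (row_span K P) \<longleftrightarrow> det Q / det P \<in> K"
proof
  assume "row_span K Q \<in> SL_orbit (row_span K P)"
  then obtain A :: "'a^'n^'n" where A: "det A = 1" "row_span K Q = row_span K (P ** A)"
    unfolding SL_orbit_def by (auto simp: act_row_span)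
  then have "det Q / det (P ** A) \<in> K"
    using P by (intro det_quotient_in_subfield[OF K]) (simp_all add: det_mul)
  then show "det Q / det P \<in> K"
    using A(1) by (simp add: det_mul)
next
  assume quotient: "det Q / det P \<in> K"
  obtain P' where P': "P ** P' = mat 1" "det P' = inverse (det P)"
    using det_nonzero_inverseE[OF P] by blast
  define \<mu> where "\<mu> = det P / det Q"
  have \<mu>: "\<mu> \<in> K" "\<mu> \<noteq> 0"
    using subfield_inverse[OF K quotient] P Q by (simp_all add: \<mu>_def)
  fix j :: 'n
  let ?A = "P' ** scale_row j \<mu> Q"
  have "act ?A (row_span K P) = row_span K Q"
    by (simp add: act_row_span matrix_mul_assoc P'(1) row_span_scale_row[OF K \<mu>])
  moreover have "det ?A = 1"
    using P Q by (simp add: det_mul det_scale_row P'(2) \<mu>_def)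
  ultimately show "row_span K Q \<in> SL_orbit (row_span K P)"
    unfolding SL_orbit_def by (metis (mono_tags, lifting) mem_Collect_eq)
qed

lemma SL_transitive_on_fat_subspaces:
  fixes U W :: "('a::field^'n::finite) set"
  assumes K: "subfield K" and k: "k < CARD('n)"
    and U: "U \<in> fat_subspaces K k" and W: "W \<in> fat_subspaces K k"
  shows "\<exists>A::'a^'n^'n. det A = 1 \<and> act A U = W"
proof -
  obtain P :: "'a^'n^'n" where P: "det P \<noteq> 0" "U = K_span K (\<lambda>i. P $ enum_nth i) k"
    using fat_subspace_frame[OF K U] k by auto
  obtain Q :: "'a^'n^'n" where Q: "det Q \<noteq> 0" "W = K_span K (\<lambda>i. Q $ enum_nth i) k"
    using fat_subspace_frame[OF K W] k by auto
  obtain P' where P': "P ** P' = mat 1" "det P' = inverse (det P)"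
    using det_nonzero_inverseE[OF P(1)] by blast
  \<comment> \<open>Row k is not among the first k rows, which span W; rescaling it adjusts the determinant only.\<close>
  define Q' where "Q' = scale_row (enum_nth k) (det P / det Q) Q"
  have "act (P' ** Q') U = K_span K (\<lambda>i. Q' $ enum_nth i) k"
    by (simp add: P(2) act_K_span matrix_matrix_mult_row[symmetric] matrix_mul_assoc P'(1))
  also have "\<dots> = W"
    unfolding Q(2) Q'_def using k by (intro K_span_cong) (simp add: scale_row_def enum_nth_eq_iff)
  finally have "act (P' ** Q') U = W" .
  moreover have "det (P' ** Q') = 1"
    using P Q by (simp add: det_mul Q'_def det_scale_row P'(2))
  ultimately show ?thesis
    by blast
qed

lemma det_image_invertible: "det ` {A :: 'a::field^'n::finite^'n. det A \<noteq> 0} = UNIV - {0}"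
proof -
  fix j :: 'n
  have "det (scale_row j x (mat 1) :: 'a^'n^'n) = x" for x
    by (simp add: det_scale_row)
  then show ?thesis
    by (auto intro: image_eqI[of _ det "scale_row j _ (mat 1)"])
qed

lemma card_image_eq_if_same_fibres:
  assumes "\<And>x y. x \<in> S \<Longrightarrow> y \<in> S \<Longrightarrow> f x = f y \<longleftrightarrow> g x = g y"
  shows "card (f ` S) = card (g ` S)"
proof -
  let ?T = "(\<lambda>x. (f x, g x)) ` S"
  have "inj_on fst ?T" "inj_on snd ?T"
    using assms by (auto simp: inj_on_def)
  then have "card (fst ` ?T) = card (snd ` ?T)"
    by (simp add: card_image)
  then show ?thesis
    by (simp add: image_image)
qed

lemma card_SL_orbits_full_fat:
  assumes K: "subfield K"
  shows "card (SL_orbit ` (fat_subspaces K CARD('n) :: ('a::field^'n::finite) set set))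
    = card (unit_coset K ` (UNIV - {0::'a}))"
proof -
  let ?GL = "{P :: 'a^'n^'n. det P \<noteq> 0}"
  have "unit_coset K ` (UNIV - {0}) = unit_coset K ` det ` ?GL"
    by (simp add: det_image_invertible)
  also have "\<dots> = (\<lambda>P. unit_coset K (det P)) ` ?GL"
    by (simp add: image_image)
  finally have cosets: "unit_coset K ` (UNIV - {0}) = (\<lambda>P. unit_coset K (det P)) ` ?GL" .
  have "card ((\<lambda>P. SL_orbit (row_span K P)) ` ?GL) = card ((\<lambda>P. unit_coset K (det P)) ` ?GL)"
    by (rule card_image_eq_if_same_fibres)
      (simp add: SL_orbit_eq_iff row_span_mem_SL_orbit_iff[OF K] unit_coset_eq_iff[OF K])
  then show ?thesis
    by (simp add: cosets fat_subspaces_eq_row_spans[OF K] image_image)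
qed

lemma card_SL_orbit_eq_full_fat:
  fixes U W :: "('a::field^'n::finite) set"
  assumes K: "subfield K"
    and U: "U \<in> fat_subspaces K CARD('n)" and W: "W \<in> fat_subspaces K CARD('n)"
  shows "card (SL_orbit U) = card (SL_orbit W)"
proof -
  obtain P Q :: "'a^'n^'n" where P: "det P \<noteq> 0" "U = row_span K P"
    and Q: "det Q \<noteq> 0" "W = row_span K Q"
    using U W by (auto simp: fat_subspaces_eq_row_spans[OF K])
  obtain P' where P': "P ** P' = mat 1" "det P' = inverse (det P)"
    using det_nonzero_inverseE[OF P(1)] by blast
  have "W = act (P' ** Q) U"
    by (simp add: P(2) Q(2) act_row_span matrix_mul_assoc P'(1))
  moreover have "det (P' ** Q) \<noteq> 0"
    using P Q by (simp add: det_mul P'(2))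
  ultimately show ?thesis
    by (simp add: card_SL_orbit_act)
qed

theorem lemma13:
  fixes K :: "'a::{field,finite} set" and g k :: nat
  assumes "subfield K"
    and "g \<ge> 1"
    and "CARD('a) = card K ^ g"
    and "1 \<le> k" and "k \<le> CARD('n::finite)"
  shows "(k < CARD('n) \<longrightarrow>
           (\<forall>U \<in> (fat_subspaces K k :: ('a^'n) set set). \<forall>W \<in> fat_subspaces K k.
              \<exists>A :: 'a^'n^'n. det A = 1 \<and> act A U = W))
       \<and> (k = CARD('n) \<longrightarrow>
           real (card (SL_orbit ` (fat_subspaces K k :: ('a^'n) set set)))
             = (real (card K) ^ g - 1) / (real (card K) - 1)
           \<and> (\<forall>O1 \<in> SL_orbit ` (fat_subspaces K k :: ('a^'n) set set).
                \<forall>O2 \<in> SL_orbit ` (fat_subspaces K k :: ('a^'n) set set). card O1 = card O2))"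
proof (intro conjI impI)
  note K = \<open>subfield K\<close>
  show "\<forall>U \<in> (fat_subspaces K k :: ('a^'n) set set). \<forall>W \<in> fat_subspaces K k.
      \<exists>A :: 'a^'n^'n. det A = 1 \<and> act A U = W" if "k < CARD('n)"
    using SL_transitive_on_fat_subspaces[OF K that] by blast
  assume k: "k = CARD('n)"
  let ?N = "card (SL_orbit ` (fat_subspaces K k :: ('a^'n) set set))"
  have "?N * (card K - 1) = card K ^ g - 1"
    using card_SL_orbits_full_fat[OF K, where 'n='n] card_unit_cosets[OF K] k \<open>CARD('a) = card K ^ g\<close> by simp
  then have "real ?N * real (card K - 1) = real (card K ^ g - 1)"
    by (metis of_nat_mult)
  moreover have "2 \<le> card K"
    using card_mono[of K "{0, 1}"] subfield_zero[OF K] subfield_one[OF K] by simp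
  ultimately have "real ?N * (real (card K) - 1) = real (card K) ^ g - 1"
    by (simp add: of_nat_diff one_le_power)
  then show "real ?N = (real (card K) ^ g - 1) / (real (card K) - 1)"
    using \<open>2 \<le> card K\<close> by (simp add: field_simps)
  show "\<forall>O1 \<in> SL_orbit ` (fat_subspaces K k :: ('a^'n) set set).
      \<forall>O2 \<in> SL_orbit ` (fat_subspaces K k :: ('a^'n) set set). card O1 = card O2"
    using card_SL_orbit_eq_full_fat[OF K] k by blast
qed

end
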